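(* Let $n=p_1^{m_1}\cdots p_k^{m_k}$. The essential ideal graph $\mathcal E_{\mathbb Z_n}$ is Laplacian integral if and only if all eigenvalues of $\mathbf L(\mathscr G)$ are integers.
   Context: Primes $p_1<\dots<p_k$, positive integers $m_i$, $n$ not prime. Nonzero proper ideals of $\mathbb Z_n$ are uniquely $\langle p_1^{r_1}\cdots p_k^{r_k}\rangle$, $0\le r_i\le m_i$, $(r_i)\ne(0,\dots,0),(m_1,\dots,m_k)$; essential iff $r_j\ne m_j$ for all $j$. Essential ideal graph $\mathcal E_{\mathbb Z_n}$: vertices nonzero proper ideals, distinct $I,K$ adjacent iff $I+K$ essential. A graph is Laplacian integral if all eigenvalues of its Laplacian $D-A$ are integers. $\mathscr G$: vertex set the $2^k-2$ ideals $\langle\prod_{i\in S}p_i^{m_i}\rangle$, $S$ nonempty proper subset of $\{1,\dots,k\}$ (write $\Xi_I=S$), $I\sim J$ iff $\Xi_I\cap\Xi_J=\emptyset$. $n_I=\prod_{i\notin\Xi_I}m_i$, $N_I=\sum_{J\sim I}n_J$. $\mathbf L(\mathscr G)$: matrix indexed by $V(\mathscr G)$ with diagonal entries $N_I$, $(I,J)$-entry $-n_J$ if $I\ne J$, $I\sim J$, and $0$ otherwise. *)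

theory Defs
  imports "HOL-Number_Theory.Number_Theory" "HOL-Algebra.Algebra"
begin

abbreviation Zn :: "nat \<Rightarrow> int ring" where
  "Zn n \<equiv> residue_ring (int n)"

definition essential_ideal :: "('a, 'b) ring_scheme \<Rightarrow> 'a set \<Rightarrow> bool" where
  "essential_ideal R I \<longleftrightarrow> ideal I R \<and>
     (\<forall>J. ideal J R \<and> J \<noteq> {\<zero>\<^bsub>R\<^esub>} \<longrightarrow> I \<inter> J \<noteq> {\<zero>\<^bsub>R\<^esub>})"

definition EIG_vertices :: "('a, 'b) ring_scheme \<Rightarrow> 'a set set" where
  "EIG_vertices R = {I. ideal I R \<and> I \<noteq> {\<zero>\<^bsub>R\<^esub>} \<and> I \<noteq> carrier R}"

definition EIG_adj :: "('a, 'b) ring_scheme \<Rightarrow> 'a set \<Rightarrow> 'a set \<Rightarrow> bool" where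
  "EIG_adj R I K \<longleftrightarrow> I \<in> EIG_vertices R \<and> K \<in> EIG_vertices R \<and> I \<noteq> K
     \<and> essential_ideal R (I <+>\<^bsub>R\<^esub> K)"

definition laplacian :: "'v set \<Rightarrow> ('v \<Rightarrow> 'v \<Rightarrow> bool) \<Rightarrow> 'v \<Rightarrow> 'v \<Rightarrow> int" where
  "laplacian V E x y =
     (if x = y then int (card {z \<in> V. E x z}) else if E x y then -1 else 0)"

definition is_eigenvalue :: "'v set \<Rightarrow> ('v \<Rightarrow> 'v \<Rightarrow> complex) \<Rightarrow> complex \<Rightarrow> bool" where
  "is_eigenvalue V M c \<longleftrightarrow> (\<exists>u :: 'v \<Rightarrow> complex. (\<exists>x\<in>V. u x \<noteq> 0) \<and>
      (\<forall>x\<in>V. (\<Sum>y\<in>V. M x y * u y) = c * u x))"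

definition all_eigenvalues_integral :: "'v set \<Rightarrow> ('v \<Rightarrow> 'v \<Rightarrow> int) \<Rightarrow> bool" where
  "all_eigenvalues_integral V M \<longleftrightarrow>
     (\<forall>c. is_eigenvalue V (\<lambda>x y. of_int (M x y)) c \<longrightarrow> c \<in> \<int>)"

definition laplacian_integral :: "'v set \<Rightarrow> ('v \<Rightarrow> 'v \<Rightarrow> bool) \<Rightarrow> bool" where
  "laplacian_integral V E \<longleftrightarrow> all_eigenvalues_integral V (laplacian V E)"

text \<open>The graph G: vertices are indexed by Xi_I = S, a nonempty proper subset of the
  set of prime divisors of n (vertex = ideal generated by the product of p^{m_p}, p in S).\<close>
definition G_vertices :: "nat \<Rightarrow> nat set set" where
  "G_vertices n = {S. S \<subseteq> prime_factors n \<and> S \<noteq> {} \<and> S \<noteq> prime_factors n}"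

definition G_adj :: "nat \<Rightarrow> nat set \<Rightarrow> nat set \<Rightarrow> bool" where
  "G_adj n S T \<longleftrightarrow> S \<in> G_vertices n \<and> T \<in> G_vertices n \<and> S \<inter> T = {}"

definition n_weight :: "nat \<Rightarrow> nat set \<Rightarrow> nat" where
  "n_weight n S = (\<Prod>p \<in> prime_factors n - S. multiplicity p n)"

definition N_weight :: "nat \<Rightarrow> nat set \<Rightarrow> nat" where
  "N_weight n S = (\<Sum>T \<in> {T \<in> G_vertices n. G_adj n S T}. n_weight n T)"

definition LG :: "nat \<Rightarrow> nat set \<Rightarrow> nat set \<Rightarrow> int" where
  "LG n S T = (if S = T then int (N_weight n S)
               else if G_adj n S T then - int (n_weight n T) else 0)"

end

theory Submission
  imports Defs
begin

text \<open>
  Every nonzero proper ideal of \<open>\<int>\<^sub>n\<close> is \<open>\<langle>d\<rangle>\<close> for a unique proper divisor \<open>d\<close> of \<open>n\<close>, and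
  \<open>\<langle>d\<rangle> + \<langle>e\<rangle> = \<langle>gcd d e\<rangle>\<close> is essential iff no prime is saturated (\<open>p ^ m\<^sub>p\<close> divides) in both.
  Hence \<open>\<E>\<^sub>\<int>\<^sub>n\<close> arises from \<open>\<G>\<close> by blowing up each vertex \<open>S\<close> into \<open>n\<^sub>S\<close> pairwise
  non-adjacent vertices (the ideals \<open>I\<close> with \<open>\<Xi>\<^sub>I = S\<close>) and adding a clique \<open>U\<close> of universal
  vertices (the essential ideals).

  For such a blow-up, eigenvectors of \<open>L(\<G>)\<close> for nonzero eigenvalues are orthogonal to the
  weights and lift (constant on fibres, zero on \<open>U\<close>) to eigenvectors of the Laplacian, with the
  eigenvalue shifted by \<open>|U|\<close>. Conversely, an eigenvector of the Laplacian whose eigenvalue is not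
  \<open>0\<close>, \<open>|V|\<close> or some \<open>|U| + N\<^sub>S\<close> sums to zero, hence vanishes on \<open>U\<close>, hence is constant on each
  fibre and descends. So the two spectra agree up to integers.
\<close>

section \<open>Laplacians of blown-up weighted graphs\<close>

definition weighted_degree :: "'w set \<Rightarrow> ('w \<Rightarrow> 'w \<Rightarrow> bool) \<Rightarrow> ('w \<Rightarrow> nat) \<Rightarrow> 'w \<Rightarrow> nat" where
  "weighted_degree W A w S = (\<Sum>T\<in>{T\<in>W. A S T}. w T)"

definition weighted_laplacian ::
    "'w set \<Rightarrow> ('w \<Rightarrow> 'w \<Rightarrow> bool) \<Rightarrow> ('w \<Rightarrow> nat) \<Rightarrow> 'w \<Rightarrow> 'w \<Rightarrow> int" where
  "weighted_laplacian W A w S T =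
     (if S = T then int (weighted_degree W A w S) else if A S T then - int (w T) else 0)"

lemma laplacian_eq_weighted_laplacian: "laplacian V E = weighted_laplacian V E (\<lambda>_. 1)"
  by (simp add: fun_eq_iff laplacian_def weighted_laplacian_def weighted_degree_def)

lemma weighted_laplacian_mult:
  fixes \<xi> :: "'w \<Rightarrow> complex"
  assumes "finite W" and "S \<in> W" and "\<not> A S S"
  shows "(\<Sum>T\<in>W. of_int (weighted_laplacian W A w S T) * \<xi> T)
    = of_nat (weighted_degree W A w S) * \<xi> S - (\<Sum>T\<in>{T\<in>W. A S T}. of_nat (w T) * \<xi> T)"
proof -
  have "(\<Sum>T\<in>W. of_int (weighted_laplacian W A w S T) * \<xi> T)
      = (\<Sum>T\<in>W. (if T = S then of_nat (weighted_degree W A w S) * \<xi> T else 0)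
                  - (if A S T then of_nat (w T) * \<xi> T else 0))"
    by (rule sum.cong) (use assms in \<open>auto simp: weighted_laplacian_def\<close>)
  also have "\<dots> = of_nat (weighted_degree W A w S) * \<xi> S - (\<Sum>T\<in>{T\<in>W. A S T}. of_nat (w T) * \<xi> T)"
    using assms by (simp add: sum_subtractf sum.inter_filter)
  finally show ?thesis .
qed

text \<open>The weights form a left null vector of the weighted Laplacian.\<close>
lemma eigenvalue_mult_weighted_sum_eq_0:
  fixes \<xi> :: "'w \<Rightarrow> complex"
  assumes fin: "finite W"
    and sym: "\<And>S T. S \<in> W \<Longrightarrow> T \<in> W \<Longrightarrow> A S T \<Longrightarrow> A T S"
    and irrefl: "\<And>S. S \<in> W \<Longrightarrow> \<not> A S S"
    and eigen: "\<And>S. S \<in> W \<Longrightarrow> (\<Sum>T\<in>W. of_int (weighted_laplacian W A w S T) * \<xi> T) = c * \<xi> S"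
  shows "c * (\<Sum>S\<in>W. of_nat (w S) * \<xi> S) = 0"
proof -
  define deg where "deg = weighted_degree W A w"
  have "c * (\<Sum>S\<in>W. of_nat (w S) * \<xi> S)
      = (\<Sum>S\<in>W. of_nat (w S) * (of_nat (deg S) * \<xi> S - (\<Sum>T\<in>{T\<in>W. A S T}. of_nat (w T) * \<xi> T)))"
    unfolding sum_distrib_left
    by (rule sum.cong) (simp_all add: eigen[symmetric] weighted_laplacian_mult fin irrefl deg_def)
  also have "\<dots> = (\<Sum>S\<in>W. of_nat (w S) * of_nat (deg S) * \<xi> S)
      - (\<Sum>S\<in>W. \<Sum>T\<in>W. if A S T then of_nat (w S) * of_nat (w T) * \<xi> T else 0)"
    by (simp add: sum_subtractf right_diff_distrib sum_distrib_left sum.inter_filter[OF fin]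
        if_distrib mult.assoc cong: if_cong)
  also have "(\<Sum>S\<in>W. \<Sum>T\<in>W. if A S T then of_nat (w S) * of_nat (w T) * \<xi> T else 0)
      = (\<Sum>T\<in>W. \<Sum>S\<in>W. if A T S then of_nat (w S) * of_nat (w T) * \<xi> T else (0::complex))"
    by (subst sum.swap) (auto intro!: sum.cong dest: sym)
  also have "\<dots> = (\<Sum>T\<in>W. of_nat (w T) * of_nat (deg T) * \<xi> T)"
    by (rule sum.cong) (auto simp: deg_def weighted_degree_def sum.inter_filter[OF fin, symmetric]
        sum_distrib_right[symmetric] sum_distrib_left mult_ac)
  finally show ?thesis by simp
qed

locale blowup_graph =
  fixes V :: "'v set" and E :: "'v \<Rightarrow> 'v \<Rightarrow> bool"
    and W :: "'w set" and A :: "'w \<Rightarrow> 'w \<Rightarrow> bool" and w :: "'w \<Rightarrow> nat"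
    and cls :: "'v \<Rightarrow> 'w" and U :: "'v set"
  assumes finite_V: "finite V" and finite_W: "finite W" and U_subset: "U \<subseteq> V"
    and cls_in_W: "x \<in> V - U \<Longrightarrow> cls x \<in> W"
    and card_fibre: "S \<in> W \<Longrightarrow> card {x \<in> V - U. cls x = S} = w S"
    and weight_pos: "S \<in> W \<Longrightarrow> 0 < w S"
    and adj_iff: "x \<in> V \<Longrightarrow> y \<in> V \<Longrightarrow> E x y \<longleftrightarrow> x \<noteq> y \<and> (x \<in> U \<or> y \<in> U \<or> A (cls x) (cls y))"
    and A_sym: "A S T \<Longrightarrow> A T S"
    and A_irrefl: "\<not> A S S"
begin

definition fibre :: "'w \<Rightarrow> 'v set" where
  "fibre S = {x \<in> V - U. cls x = S}"

abbreviation deg :: "'w \<Rightarrow> nat" where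
  "deg \<equiv> weighted_degree W A w"


lemma adj_sym: "x \<in> V \<Longrightarrow> y \<in> V \<Longrightarrow> E x y \<Longrightarrow> E y x"
  using adj_iff A_sym by blast

lemma adj_irrefl: "x \<in> V \<Longrightarrow> \<not> E x x"
  using adj_iff by blast

lemma sum_over_fibres:
  fixes f :: "'v \<Rightarrow> complex"
  shows "(\<Sum>z\<in>{z \<in> V - U. P (cls z)}. f z) = (\<Sum>T\<in>{T\<in>W. P T}. \<Sum>z\<in>fibre T. f z)"
proof -
  have "(\<Sum>z\<in>{z \<in> V - U. P (cls z)}. f z)
      = (\<Sum>T\<in>{T\<in>W. P T}. \<Sum>z\<in>{z \<in> {z \<in> V - U. P (cls z)}. cls z = T}. f z)"
    by (rule sum.group[symmetric]) (use finite_V finite_W cls_in_W in auto)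
  also have "\<dots> = (\<Sum>T\<in>{T\<in>W. P T}. \<Sum>z\<in>fibre T. f z)"
    by (rule sum.cong) (auto simp: fibre_def intro!: sum.cong)
  finally show ?thesis .
qed

lemma sum_neighbours_outside:
  fixes f :: "'v \<Rightarrow> complex"
  assumes x: "x \<in> V - U"
  shows "(\<Sum>z\<in>{z\<in>V. E x z}. f z) = (\<Sum>z\<in>U. f z) + (\<Sum>T\<in>{T\<in>W. A (cls x) T}. \<Sum>z\<in>fibre T. f z)"
proof -
  have "{z\<in>V. E x z} = U \<union> {z \<in> V - U. A (cls x) (cls z)}"
    using x adj_iff U_subset A_irrefl by auto
  then have "(\<Sum>z\<in>{z\<in>V. E x z}. f z) = (\<Sum>z\<in>U. f z) + (\<Sum>z\<in>{z \<in> V - U. A (cls x) (cls z)}. f z)"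
    by (simp only:) (rule sum.union_disjoint, use finite_V U_subset in \<open>auto intro: finite_subset\<close>)
  then show ?thesis by (simp only: sum_over_fibres)
qed

lemma laplacian_mult_outside:
  fixes u :: "'v \<Rightarrow> complex"
  assumes x: "x \<in> V - U"
  shows "(\<Sum>y\<in>V. of_int (laplacian V E x y) * u y)
    = of_nat (card U + deg (cls x)) * u x - (\<Sum>y\<in>U. u y)
      - (\<Sum>T\<in>{T\<in>W. A (cls x) T}. \<Sum>y\<in>fibre T. u y)"
proof -
  have "of_nat (card {z\<in>V. E x z}) = (of_nat (card U + deg (cls x)) :: complex)"
    using sum_neighbours_outside[OF x, of "\<lambda>_. 1"] card_fibre
    by (simp add: weighted_degree_def fibre_def)
  with x show ?thesis
    using weighted_laplacian_mult[OF finite_V, of x E "\<lambda>_. 1" u] adj_iff sum_neighbours_outside[OF x, of u]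
    by (simp add: laplacian_eq_weighted_laplacian weighted_degree_def)
qed

lemma laplacian_mult_universal:
  fixes u :: "'v \<Rightarrow> complex"
  assumes x: "x \<in> U"
  shows "(\<Sum>y\<in>V. of_int (laplacian V E x y) * u y) = of_nat (card V) * u x - (\<Sum>y\<in>V. u y)"
proof -
  have xV: "x \<in> V" using x U_subset by blast
  have "{z\<in>V. E x z} = V - {x}" using x xV adj_iff by auto
  moreover have "card V = Suc (card (V - {x}))" by (rule card_Suc_Diff1[OF finite_V xV, symmetric])
  ultimately show ?thesis
    using weighted_laplacian_mult[OF finite_V xV, of E "\<lambda>_. 1" u] adj_iff[OF xV xV] finite_V xV
    by (simp add: laplacian_eq_weighted_laplacian weighted_degree_def sum_diff1 algebra_simps)
qed

lemma eigenvalue_mult_sum_eq_0: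
  fixes u :: "'v \<Rightarrow> complex"
  assumes "\<And>x. x \<in> V \<Longrightarrow> (\<Sum>y\<in>V. of_int (laplacian V E x y) * u y) = c * u x"
  shows "c * (\<Sum>x\<in>V. u x) = 0"
  using eigenvalue_mult_weighted_sum_eq_0[where A = E and w = "\<lambda>_. 1", OF finite_V adj_sym adj_irrefl] assms
  unfolding laplacian_eq_weighted_laplacian by simp

definition lift :: "('w \<Rightarrow> complex) \<Rightarrow> 'v \<Rightarrow> complex" where
  "lift \<xi> x = (if x \<in> U then 0 else \<xi> (cls x))"

lemma sum_fibre_lift: "S \<in> W \<Longrightarrow> (\<Sum>x\<in>fibre S. lift \<xi> x) = of_nat (w S) * \<xi> S"
  using card_fibre by (simp add: fibre_def lift_def)

lemma sum_lift: "(\<Sum>x\<in>V. lift \<xi> x) = (\<Sum>S\<in>W. of_nat (w S) * \<xi> S)"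
proof -
  have "(\<Sum>x\<in>V. lift \<xi> x) = (\<Sum>x\<in>V - U. lift \<xi> x)"
    by (rule sum.mono_neutral_right) (use finite_V in \<open>auto simp: lift_def\<close>)
  also have "\<dots> = (\<Sum>S\<in>W. \<Sum>x\<in>fibre S. lift \<xi> x)"
    using sum_over_fibres[where P="\<lambda>_. True" and f="lift \<xi>"] by (simp add: set_diff_eq)
  finally show ?thesis by (simp add: sum_fibre_lift)
qed

lemma fibre_nonempty:
  assumes "S \<in> W"
  shows "fibre S \<noteq> {}"
proof -
  have "0 < card (fibre S)" using card_fibre[OF assms] weight_pos[OF assms] by (simp add: fibre_def)
  then show ?thesis by (auto simp: card_gt_0_iff)
qed

lemma laplacian_mult_lift:
  assumes x: "x \<in> V - U"
  shows "(\<Sum>y\<in>V. of_int (laplacian V E x y) * lift \<xi> y)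
    = of_nat (card U) * \<xi> (cls x) + (\<Sum>T\<in>W. of_int (weighted_laplacian W A w (cls x) T) * \<xi> T)"
proof -
  have "(\<Sum>T\<in>{T\<in>W. A (cls x) T}. \<Sum>y\<in>fibre T. lift \<xi> y)
      = (\<Sum>T\<in>{T\<in>W. A (cls x) T}. of_nat (w T) * \<xi> T)"
    by (rule sum.cong) (simp_all add: sum_fibre_lift)
  moreover have "(\<Sum>y\<in>U. lift \<xi> y) = 0" and "lift \<xi> x = \<xi> (cls x)"
    using x by (simp_all add: lift_def)
  ultimately have "(\<Sum>y\<in>V. of_int (laplacian V E x y) * lift \<xi> y)
      = of_nat (card U + deg (cls x)) * \<xi> (cls x) - (\<Sum>T\<in>{T\<in>W. A (cls x) T}. of_nat (w T) * \<xi> T)"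
    using laplacian_mult_outside[OF x, of "lift \<xi>"] by simp
  then show ?thesis
    unfolding weighted_laplacian_mult[where A = A, OF finite_W cls_in_W[OF x] A_irrefl]
    by (simp add: algebra_simps)
qed

lemma eigenvalue_lift:
  assumes "is_eigenvalue W (\<lambda>S T. of_int (weighted_laplacian W A w S T)) \<mu>" and "\<mu> \<noteq> 0"
  shows "is_eigenvalue V (\<lambda>x y. of_int (laplacian V E x y)) (of_nat (card U) + \<mu>)"
proof -
  obtain \<xi> S0 where S0: "S0 \<in> W" "\<xi> S0 \<noteq> 0"
    and eigen: "\<And>S. S \<in> W \<Longrightarrow> (\<Sum>T\<in>W. of_int (weighted_laplacian W A w S T) * \<xi> T) = \<mu> * \<xi> S"
    using assms(1) unfolding is_eigenvalue_def by blast
  have "\<mu> * (\<Sum>S\<in>W. of_nat (w S) * \<xi> S) = 0"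
    by (rule eigenvalue_mult_weighted_sum_eq_0[OF finite_W _ _ eigen]) (use A_sym A_irrefl in auto)
  with \<open>\<mu> \<noteq> 0\<close> have sum_lift_0: "(\<Sum>x\<in>V. lift \<xi> x) = 0"
    by (simp add: sum_lift)
  obtain x0 where "x0 \<in> fibre S0"
    using fibre_nonempty[OF S0(1)] by blast
  show ?thesis
    unfolding is_eigenvalue_def
  proof (intro exI[of _ "lift \<xi>"] conjI ballI)
    show "\<exists>x\<in>V. lift \<xi> x \<noteq> 0"
      using \<open>x0 \<in> fibre S0\<close> S0 by (auto simp: fibre_def lift_def)
    fix x assume "x \<in> V"
    show "(\<Sum>y\<in>V. of_int (laplacian V E x y) * lift \<xi> y) = (of_nat (card U) + \<mu>) * lift \<xi> x"
    proof (cases "x \<in> U")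
      case True
      then show ?thesis using laplacian_mult_universal sum_lift_0 by (simp add: lift_def)
    next
      case False
      with \<open>x \<in> V\<close> show ?thesis
        using laplacian_mult_lift eigen cls_in_W by (simp add: lift_def algebra_simps)
    qed
  qed
qed

text \<open>Apart from the eigenvalues \<open>0\<close>, \<open>|V|\<close> and \<open>|U| + deg S\<close>, an eigenvector of the
  Laplacian vanishes on \<open>U\<close> and is constant on each fibre, so it is a lift.\<close>
lemma eigenvalue_descend:
  assumes "is_eigenvalue V (\<lambda>x y. of_int (laplacian V E x y)) c"
    and "c \<noteq> 0" and "c \<noteq> of_nat (card V)" and "\<forall>S\<in>W. c \<noteq> of_nat (card U + deg S)"
  shows "is_eigenvalue W (\<lambda>S T. of_int (weighted_laplacian W A w S T)) (c - of_nat (card U))"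
proof -
  obtain u x0 where x0: "x0 \<in> V" "u x0 \<noteq> 0"
    and eigen: "\<And>x. x \<in> V \<Longrightarrow> (\<Sum>y\<in>V. of_int (laplacian V E x y) * u y) = c * u x"
    using assms(1) unfolding is_eigenvalue_def by blast
  have "(\<Sum>x\<in>V. u x) = 0"
    using eigenvalue_mult_sum_eq_0[OF eigen] \<open>c \<noteq> 0\<close> by simp
  then have u_U: "u x = 0" if "x \<in> U" for x
    using eigen[of x] laplacian_mult_universal[OF that, of u] that U_subset \<open>c \<noteq> of_nat (card V)\<close>
    by auto
  define z where "z S = (\<Sum>T\<in>{T\<in>W. A S T}. \<Sum>y\<in>fibre T. u y) / (of_nat (card U + deg S) - c)" for S
  have u_fibre: "u x = z (cls x)" if x: "x \<in> V - U" for x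
  proof -
    have "(of_nat (card U + deg (cls x)) - c) * u x = (\<Sum>T\<in>{T\<in>W. A (cls x) T}. \<Sum>y\<in>fibre T. u y)"
      using eigen[of x] laplacian_mult_outside[OF x, of u] u_U x by (simp add: algebra_simps)
    moreover have "of_nat (card U + deg (cls x)) - c \<noteq> 0"
      using assms(4) cls_in_W[OF x] by auto
    ultimately show ?thesis by (simp add: z_def field_simps)
  qed
  have u_lift: "(\<Sum>y\<in>V. of_int (laplacian V E x y) * u y) = (\<Sum>y\<in>V. of_int (laplacian V E x y) * lift z y)"
    for x
    by (rule sum.cong) (auto simp: lift_def u_U u_fibre)
  show ?thesis
    unfolding is_eigenvalue_def
  proof (intro exI[of _ z] conjI ballI)
    show "\<exists>S\<in>W. z S \<noteq> 0"
      using x0 u_U u_fibre cls_in_W by (metis Diff_iff)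
    fix S assume "S \<in> W"
    then obtain x where x: "x \<in> fibre S" using fibre_nonempty by blast
    then have "x \<in> V - U" "cls x = S" by (auto simp: fibre_def)
    then show "(\<Sum>T\<in>W. of_int (weighted_laplacian W A w S T) * z T) = (c - of_nat (card U)) * z S"
      using eigen[of x] u_lift[of x] laplacian_mult_lift[of x z] u_fibre[of x] by (simp add: algebra_simps)
  qed
qed

theorem laplacian_integral_iff:
  "laplacian_integral V E \<longleftrightarrow> all_eigenvalues_integral W (weighted_laplacian W A w)"
proof
  assume integral: "laplacian_integral V E"
  show "all_eigenvalues_integral W (weighted_laplacian W A w)"
    unfolding all_eigenvalues_integral_def
  proof (intro allI impI)
    fix \<mu> assume \<mu>: "is_eigenvalue W (\<lambda>S T. of_int (weighted_laplacian W A w S T)) \<mu>"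
    show "\<mu> \<in> \<int>"
    proof (cases "\<mu> = 0")
      case False
      then have "of_nat (card U) + \<mu> \<in> \<int>"
        using integral eigenvalue_lift[OF \<mu>]
        unfolding laplacian_integral_def all_eigenvalues_integral_def by blast
      then show ?thesis by simp
    qed simp
  qed
next
  assume integral: "all_eigenvalues_integral W (weighted_laplacian W A w)"
  show "laplacian_integral V E"
    unfolding laplacian_integral_def all_eigenvalues_integral_def
  proof (intro allI impI)
    fix c assume c: "is_eigenvalue V (\<lambda>x y. of_int (laplacian V E x y)) c"
    show "c \<in> \<int>"
    proof (cases "c = 0 \<or> c = of_nat (card V) \<or> (\<exists>S\<in>W. c = of_nat (card U + deg S))")
      case False
      then have "c - of_nat (card U) \<in> \<int>"
        using integral eigenvalue_descend[OF c] unfolding all_eigenvalues_integral_def by auto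
      then show ?thesis by simp
    qed auto
  qed
qed

end


section \<open>Saturated primes of divisors\<close>

definition saturated_primes :: "nat \<Rightarrow> nat \<Rightarrow> nat set" where
  "saturated_primes n d = {p \<in> prime_factors n. p ^ multiplicity p n dvd d}"

lemma saturated_primes_self: "saturated_primes n n = prime_factors n"
  by (auto simp: saturated_primes_def multiplicity_dvd)

lemma saturated_primes_one: "saturated_primes n 1 = {}"
  by (auto simp: saturated_primes_def prime_factors_multiplicity)

lemma saturated_primes_gcd:
  "saturated_primes n (gcd d e) = saturated_primes n d \<inter> saturated_primes n e"
  by (auto simp: saturated_primes_def)

lemma saturated_primes_multiplicity:
  assumes "d \<noteq> 0"
  shows "saturated_primes n d = {p \<in> prime_factors n. multiplicity p n \<le> multiplicity p d}"
proof -
  have "p ^ k dvd d \<longleftrightarrow> k \<le> multiplicity p d" if "p \<in> prime_factors n" for p k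
    using that assms by (intro power_dvd_iff_le_multiplicity) (auto dest: in_prime_factors_imp_prime not_prime_unit)
  then show ?thesis by (auto simp: saturated_primes_def)
qed

lemma saturated_primes_eq_prime_factors:
  assumes "n > 0" and "d dvd n" and "saturated_primes n d = prime_factors n"
  shows "d = n"
proof -
  have "d \<noteq> 0" using assms by auto
  have "n dvd d"
  proof (rule multiplicity_le_imp_dvd)
    fix q :: nat assume q: "Factorial_Ring.prime q"
    show "multiplicity q n \<le> multiplicity q d"
    proof (cases "q \<in> prime_factors n")
      case True
      then show ?thesis using assms(3) saturated_primes_multiplicity[OF \<open>d \<noteq> 0\<close>] by auto
    next
      case False
      then show ?thesis using q \<open>n > 0\<close> by (simp add: prime_factors_multiplicity)
    qed
  qed (use \<open>n > 0\<close> in simp)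
  with \<open>d dvd n\<close> show ?thesis by (simp add: dvd_antisym)
qed

lemma prime_mult_dvd_iff_not_saturated:
  assumes "n > 0" and "d dvd n" and p: "p \<in> prime_factors n"
  shows "p * d dvd n \<longleftrightarrow> p \<notin> saturated_primes n d"
proof -
  obtain k where n: "n = d * k" using assms(2) by blast
  have "d \<noteq> 0" "k \<noteq> 0" using n \<open>n > 0\<close> by auto
  have "Factorial_Ring.prime p" using p by auto
  have "p * d dvd n \<longleftrightarrow> p dvd k"
    using \<open>d \<noteq> 0\<close> by (simp add: n mult.commute[of p])
  also have "\<dots> \<longleftrightarrow> 0 < multiplicity p k"
    using \<open>Factorial_Ring.prime p\<close> \<open>k \<noteq> 0\<close> by (simp add: prime_multiplicity_gt_zero_iff)
  also have "\<dots> \<longleftrightarrow> multiplicity p d < multiplicity p n"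
    using \<open>Factorial_Ring.prime p\<close> \<open>d \<noteq> 0\<close> \<open>k \<noteq> 0\<close> by (simp add: n prime_elem_multiplicity_mult_distrib)
  also have "\<dots> \<longleftrightarrow> p \<notin> saturated_primes n d"
    using p saturated_primes_multiplicity[OF \<open>d \<noteq> 0\<close>] by auto
  finally show ?thesis .
qed

lemma lcm_ne_if_saturated_primes_empty:
  assumes "n > 0" and "g dvd n" and none: "saturated_primes n g = {}"
    and e: "e dvd n" "e \<noteq> n"
  shows "lcm g e \<noteq> n"
proof -
  obtain m where m: "n = e * m" using e by blast
  with e obtain p where p: "Factorial_Ring.prime p" "p dvd m" using prime_factor_nat[of m] by auto
  then have pe: "p * e dvd n" by (simp add: m mult.commute mult_dvd_mono)
  have "p \<in> prime_factors n" using p \<open>n > 0\<close> m by (auto simp: in_prime_factors_iff)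
  then have pg: "p * g dvd n"
    using prime_mult_dvd_iff_not_saturated[OF assms(1,2)] none by blast
  obtain q where q: "n = p * q" using dvd_mult_left[OF pe] by (blast elim: dvdE)
  have "p > 1" using p(1) by (rule prime_gt_1_nat)
  then have "lcm g e dvd q" "q > 0" "q < n"
    using pe pg q \<open>n > 0\<close> by auto
  then have "lcm g e < n" using dvd_imp_le[of "lcm g e" q] by linarith
  then show ?thesis by simp
qed

lemma lcm_saturated_cofactor:
  assumes "n > 0" and "g dvd n" and p: "p \<in> saturated_primes n g"
  defines "e \<equiv> n div p ^ multiplicity p n"
  shows "e dvd n" and "e \<noteq> n" and "lcm g e = n"
proof -
  define a where "a = multiplicity p n"
  have "Factorial_Ring.prime p" "p ^ a dvd g"
    using p by (auto simp: saturated_primes_def a_def)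
  have n: "n = p ^ a * e" unfolding e_def a_def by (simp add: multiplicity_dvd)
  then show "e dvd n" by simp
  have "1 < p ^ a"
    using p prime_gt_1_nat[OF \<open>Factorial_Ring.prime p\<close>]
    by (intro one_less_power) (auto simp: a_def saturated_primes_def prime_factors_multiplicity)
  then show "e \<noteq> n" using n \<open>n > 0\<close> by auto
  have "\<not> p dvd e"
    using multiplicity_decompose[of n p] \<open>n > 0\<close> prime_gt_1_nat[OF \<open>Factorial_Ring.prime p\<close>]
    by (simp add: e_def)
  then have "coprime (p ^ a) e" using \<open>Factorial_Ring.prime p\<close> by (simp add: prime_imp_coprime)
  moreover have "p ^ a dvd lcm g e" using dvd_trans[OF \<open>p ^ a dvd g\<close> dvd_lcm1] .
  ultimately have "n dvd lcm g e" unfolding n by (simp add: divides_mult)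
  moreover have "lcm g e dvd n" using assms(2) unfolding n by simp
  ultimately show "lcm g e = n" by (rule dvd_antisym[rotated])
qed

lemma saturated_primes_empty_iff_lcm:
  assumes "n > 0" and "g dvd n"
  shows "saturated_primes n g = {} \<longleftrightarrow> (\<forall>e. e dvd n \<and> e \<noteq> n \<longrightarrow> lcm g e \<noteq> n)"
  using lcm_ne_if_saturated_primes_empty[OF assms] lcm_saturated_cofactor[OF assms] by blast

lemma saturated_primes_iff_multiplicity_eq:
  assumes "n > 0" and "d dvd n"
  shows "p \<in> saturated_primes n d \<longleftrightarrow> p \<in> prime_factors n \<and> multiplicity p d = multiplicity p n"
proof -
  have "d \<noteq> 0" and "multiplicity p d \<le> multiplicity p n"
    using assms by (auto intro: dvd_imp_multiplicity_le)
  then show ?thesis using saturated_primes_multiplicity[OF \<open>d \<noteq> 0\<close>] by auto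
qed

definition exponent_divisor :: "nat \<Rightarrow> nat set \<Rightarrow> (nat \<Rightarrow> nat) \<Rightarrow> nat" where
  "exponent_divisor n S r = (\<Prod>p\<in>prime_factors n. p ^ (if p \<in> S then multiplicity p n else r p))"

lemma multiplicity_exponent_divisor:
  assumes "Factorial_Ring.prime q"
  shows "multiplicity q (exponent_divisor n S r)
    = (if q \<in> prime_factors n then if q \<in> S then multiplicity q n else r q else 0)"
  unfolding exponent_divisor_def using assms
  by (subst multiplicity_prod_prime_powers) auto

lemma multiplicity_exponent_divisor_prime_factor:
  assumes "p \<in> prime_factors n"
  shows "multiplicity p (exponent_divisor n S r) = (if p \<in> S then multiplicity p n else r p)"
  using multiplicity_exponent_divisor[OF in_prime_factors_imp_prime[OF assms]] assms by simp

lemma exponent_divisor_nonzero: "exponent_divisor n S r \<noteq> 0"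
  by (auto simp: exponent_divisor_def prod_zero_iff dest: in_prime_factors_imp_prime)

lemma exponent_divisor_dvd_saturated_primes:
  assumes "n > 0" and "S \<subseteq> prime_factors n"
    and r: "r \<in> PiE (prime_factors n - S) (\<lambda>p. {0..<multiplicity p n})"
  shows "exponent_divisor n S r dvd n" and "saturated_primes n (exponent_divisor n S r) = S"
proof -
  have r_less: "r p < multiplicity p n" if "p \<in> prime_factors n" "p \<notin> S" for p
    using r that by (auto simp: PiE_iff)
  show dvd: "exponent_divisor n S r dvd n"
  proof (rule multiplicity_le_imp_dvd[OF exponent_divisor_nonzero])
    fix q :: nat assume "Factorial_Ring.prime q"
    then show "multiplicity q (exponent_divisor n S r) \<le> multiplicity q n"
      using r_less[of q] by (auto simp: multiplicity_exponent_divisor)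
  qed
  have "multiplicity p (exponent_divisor n S r) = multiplicity p n \<longleftrightarrow> p \<in> S"
    if "p \<in> prime_factors n" for p
    using r_less[of p] that by (auto simp: multiplicity_exponent_divisor_prime_factor)
  then show "saturated_primes n (exponent_divisor n S r) = S"
    using assms(2) by (auto simp: saturated_primes_iff_multiplicity_eq[OF \<open>n > 0\<close> dvd])
qed

lemma exponent_divisor_multiplicity:
  assumes "n > 0" and "d dvd n"
    and r: "\<And>p. p \<in> prime_factors n \<Longrightarrow> p \<notin> saturated_primes n d \<Longrightarrow> r p = multiplicity p d"
  shows "exponent_divisor n (saturated_primes n d) r = d"
proof -
  have "d \<noteq> 0" using assms by auto
  have "multiplicity q (exponent_divisor n (saturated_primes n d) r) = multiplicity q d"
    if "Factorial_Ring.prime q" for q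
  proof (cases "q \<in> prime_factors n")
    case True
    then show ?thesis
      using r[OF True] saturated_primes_iff_multiplicity_eq[OF assms(1,2), of q]
      by (auto simp: multiplicity_exponent_divisor_prime_factor)
  next
    case False
    then have "\<not> q dvd n" using that \<open>n > 0\<close> by (simp add: in_prime_factors_iff)
    then have "\<not> q dvd d" using dvd_trans[OF _ \<open>d dvd n\<close>] by blast
    then show ?thesis
      using that False by (simp add: multiplicity_exponent_divisor not_dvd_imp_multiplicity_0)
  qed
  then show ?thesis
    using multiplicity_eq_imp_eq[OF exponent_divisor_nonzero \<open>d \<noteq> 0\<close>] by simp
qed

text \<open>Divisors with saturated primes \<open>S\<close> correspond to exponent vectors \<open>0 \<le> r\<^sub>p < m\<^sub>p\<close>
  on the remaining primes.\<close>
lemma card_divisors_saturated_primes: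
  assumes "n > 0" and S: "S \<subseteq> prime_factors n"
  shows "card {d. d dvd n \<and> saturated_primes n d = S} = (\<Prod>p\<in>prime_factors n - S. multiplicity p n)"
proof -
  define R where "R = PiE (prime_factors n - S) (\<lambda>p. {0..<multiplicity p n})"
  define D where "D = {d. d dvd n \<and> saturated_primes n d = S}"
  define exponents where "exponents d = restrict (\<lambda>p. multiplicity p d) (prime_factors n - S)" for d
  have "bij_betw (exponent_divisor n S) R D"
  proof (rule bij_betw_byWitness[where f' = exponents])
    show "\<forall>r\<in>R. exponents (exponent_divisor n S r) = r"
    proof
      fix r assume r: "r \<in> R"
      have "exponents (exponent_divisor n S r) = restrict r (prime_factors n - S)"
        unfolding exponents_def
        by (rule restrict_ext) (simp add: multiplicity_exponent_divisor_prime_factor)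
      also have "\<dots> = r"
        using r by (simp add: R_def PiE_def extensional_restrict)
      finally show "exponents (exponent_divisor n S r) = r" .
    qed
    show "\<forall>d\<in>D. exponent_divisor n S (exponents d) = d"
      using exponent_divisor_multiplicity[OF \<open>n > 0\<close>] by (auto simp: D_def exponents_def)
    show "exponent_divisor n S ` R \<subseteq> D"
      unfolding R_def D_def using exponent_divisor_dvd_saturated_primes[OF assms] by blast
    show "exponents ` D \<subseteq> R"
      unfolding exponents_def R_def image_subset_iff restrict_PiE_iff
    proof (intro ballI)
      fix d p assume "d \<in> D" "p \<in> prime_factors n - S"
      then have "d dvd n" "multiplicity p d \<noteq> multiplicity p n"
        using saturated_primes_iff_multiplicity_eq[OF \<open>n > 0\<close>, of d p] by (auto simp: D_def)
      moreover have "multiplicity p d \<le> multiplicity p n"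
        using \<open>d dvd n\<close> \<open>n > 0\<close> by (simp add: dvd_imp_multiplicity_le)
      ultimately show "multiplicity p d \<in> {0..<multiplicity p n}" by simp
    qed
  qed
  then have "card R = card D" by (rule bij_betw_same_card)
  then show ?thesis by (simp add: D_def R_def card_PiE)
qed


section \<open>Ideals of \<open>Zn n\<close>\<close>

lemma Zn_simps:
  "carrier (Zn n) = {0..int n - 1}" "\<zero>\<^bsub>Zn n\<^esub> = 0"
  "x \<oplus>\<^bsub>Zn n\<^esub> y = (x + y) mod int n" "x \<otimes>\<^bsub>Zn n\<^esub> y = (x * y) mod int n"
  by (simp_all add: residue_ring_def)

lemma cring_Zn: "n > 1 \<Longrightarrow> cring (Zn n)"
  by (rule residues.cring) (simp add: residues_def)

text \<open>The ideal of \<open>Zn n\<close> generated by \<open>d\<close>, residues being represented in \<open>{0..<n}\<close>.\<close>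
definition divisor_ideal :: "nat \<Rightarrow> nat \<Rightarrow> int set" where
  "divisor_ideal n d = {x. 0 \<le> x \<and> x < int n \<and> int d dvd x}"

lemma divisor_ideal_self:
  assumes "n > 0"
  shows "divisor_ideal n n = {0}"
proof -
  have "x = 0" if "0 \<le> x" "x < int n" "int n dvd x" for x
    using zdvd_not_zless[of x "int n"] that by (cases "x = 0") auto
  with assms show ?thesis by (auto simp: divisor_ideal_def)
qed

lemma divisor_ideal_one: "divisor_ideal n 1 = carrier (Zn n)"
  by (auto simp: divisor_ideal_def Zn_simps)

lemma divisor_ideal_eq_cgenideal:
  assumes "n > 1" and "d dvd n"
  shows "divisor_ideal n d = PIdl\<^bsub>Zn n\<^esub> (int d mod int n)"
proof
  show "divisor_ideal n d \<subseteq> PIdl\<^bsub>Zn n\<^esub> (int d mod int n)"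
  proof
    fix y assume "y \<in> divisor_ideal n d"
    then obtain k where y: "0 \<le> y" "y < int n" "y = int d * k" by (auto simp: divisor_ideal_def)
    have "d > 0" using dvd_pos_nat[of n d] assms by simp
    then have "0 \<le> k" using y by (simp add: zero_le_mult_iff)
    moreover have "k \<le> y" using mult_right_mono[of 1 "int d" k] \<open>d > 0\<close> \<open>0 \<le> k\<close> y by simp
    ultimately have "k \<in> carrier (Zn n)" using y by (simp add: Zn_simps)
    moreover have "k \<otimes>\<^bsub>Zn n\<^esub> (int d mod int n) = y"
      using y by (simp add: Zn_simps mod_mult_right_eq mult.commute)
    ultimately show "y \<in> PIdl\<^bsub>Zn n\<^esub> (int d mod int n)" unfolding cgenideal_def by blast
  qed
  show "PIdl\<^bsub>Zn n\<^esub> (int d mod int n) \<subseteq> divisor_ideal n d"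
    using assms by (auto simp: cgenideal_def divisor_ideal_def Zn_simps intro!: dvd_mod)
qed

lemma ideal_divisor_ideal: "n > 1 \<Longrightarrow> d dvd n \<Longrightarrow> ideal (divisor_ideal n d) (Zn n)"
  by (simp add: divisor_ideal_eq_cgenideal cring.cgenideal_ideal cring_Zn Zn_simps)

lemma ideal_Zn_add_mult_mod:
  assumes "n > 1" and I: "ideal I (Zn n)" and "x mod int n \<in> I" and "y \<in> I"
  shows "(x + k * y) mod int n \<in> I"
proof -
  have "k mod int n \<in> carrier (Zn n)" using assms by (simp add: Zn_simps)
  then have "(k mod int n) \<otimes>\<^bsub>Zn n\<^esub> y \<in> I" using ideal.I_l_closed[OF I] \<open>y \<in> I\<close> by blast
  then have "x mod int n \<oplus>\<^bsub>Zn n\<^esub> ((k mod int n) \<otimes>\<^bsub>Zn n\<^esub> y) \<in> I"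
    using additive_subgroup.a_closed[OF ideal.axioms(1)[OF I]] \<open>x mod int n \<in> I\<close> by blast
  then show ?thesis by (simp add: Zn_simps mod_add_eq mod_mult_left_eq)
qed

lemma zero_in_ideal_Zn: "ideal I (Zn n) \<Longrightarrow> 0 \<in> I"
  using additive_subgroup.zero_closed[OF ideal.axioms(1)] by (fastforce simp: Zn_simps)

text \<open>Division with remainder inside an ideal: the remainder \<open>x mod d\<close> lies in the ideal,
  so it vanishes when \<open>d\<close> is the least positive element.\<close>
lemma ideal_Zn_least_dvd:
  assumes n: "n > 1" and I: "ideal I (Zn n)"
    and d: "0 < d" "int d \<in> I \<or> d = n" and least: "\<And>k. 0 < k \<Longrightarrow> int k \<in> I \<Longrightarrow> d \<le> k"
    and x: "x mod int n \<in> I"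
  shows "int d dvd x"
proof -
  define r where "r = x mod int d"
  have "0 \<le> r" "r < int d" using d by (auto simp: r_def)
  have "r \<in> I"
  proof (cases "int d \<in> I")
    case True
    have "x + (- (x div int d)) * int d = r"
      using div_mult_mod_eq[of x "int d"] unfolding r_def by linarith
    moreover have "d \<le> n" using ideal.Icarr[OF I True] by (simp add: Zn_simps)
    then have "r mod int n = r" using \<open>0 \<le> r\<close> \<open>r < int d\<close> by simp
    ultimately show ?thesis using ideal_Zn_add_mult_mod[OF n I x True, of "- (x div int d)"] by simp
  next
    case False
    then show ?thesis using x d by (simp add: r_def)
  qed
  have "r = 0"
  proof (rule ccontr)
    assume "r \<noteq> 0"
    then have "d \<le> nat r" using least[of "nat r"] \<open>r \<in> I\<close> \<open>0 \<le> r\<close> by simp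
    then show False using \<open>r < int d\<close> \<open>0 \<le> r\<close> by (simp add: le_nat_iff)
  qed
  then show ?thesis by (simp add: r_def dvd_eq_mod_eq_0)
qed

lemma ideal_Zn_obtain_divisor_ideal:
  assumes n: "n > 1" and I: "ideal I (Zn n)"
  obtains d where "d dvd n" and "I = divisor_ideal n d"
proof -
  define P where "P k \<longleftrightarrow> 0 < k \<and> (int k \<in> I \<or> k = n)" for k
  define d where "d = (LEAST k. P k)"
  have "P n" using n by (simp add: P_def)
  then have "P d" and least: "\<And>k. P k \<Longrightarrow> d \<le> k" unfolding d_def by (auto intro: LeastI Least_le)
  then have d_dvd: "int d dvd x" if "x mod int n \<in> I" for x
    using ideal_Zn_least_dvd[OF n I _ _ _ that] by (auto simp: P_def)
  have "0 \<in> I" using I by (rule zero_in_ideal_Zn)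
  then have "d dvd n" using d_dvd[of "int n"] by simp
  moreover have "I = divisor_ideal n d"
  proof
    show "I \<subseteq> divisor_ideal n d"
      using ideal.Icarr[OF I] d_dvd by (auto simp: divisor_ideal_def Zn_simps)
    show "divisor_ideal n d \<subseteq> I"
    proof
      fix y assume "y \<in> divisor_ideal n d"
      then obtain k where y: "0 \<le> y" "y < int n" "y = int d * k" by (auto simp: divisor_ideal_def)
      show "y \<in> I"
      proof (cases "int d \<in> I")
        case True
        then show ?thesis
          using ideal_Zn_add_mult_mod[OF n I _ True, of 0 k] \<open>0 \<in> I\<close> y by (simp add: mult.commute)
      next
        case False
        then have "d = n" using \<open>P d\<close> by (simp add: P_def)
        then show ?thesis using y \<open>0 \<in> I\<close> zdvd_not_zless[of y "int n"] by fastforce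
      qed
    qed
  qed
  ultimately show thesis by (rule that)
qed

lemma divisor_ideal_subset_iff:
  assumes "n > 0" and "d dvd n" and "e dvd n"
  shows "divisor_ideal n d \<subseteq> divisor_ideal n e \<longleftrightarrow> e dvd d"
proof
  assume sub: "divisor_ideal n d \<subseteq> divisor_ideal n e"
  show "e dvd d"
  proof (cases "d = n")
    case False
    then have "d < n" using assms dvd_imp_le by fastforce
    then have "int d \<in> divisor_ideal n d" by (simp add: divisor_ideal_def)
    then have "int d \<in> divisor_ideal n e" using sub by blast
    then show ?thesis by (simp add: divisor_ideal_def)
  qed (use assms in simp)
qed (auto simp: divisor_ideal_def intro: dvd_trans)

lemma divisor_ideal_eq_iff:
  "n > 0 \<Longrightarrow> d dvd n \<Longrightarrow> e dvd n \<Longrightarrow> divisor_ideal n d = divisor_ideal n e \<longleftrightarrow> d = e"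
  using divisor_ideal_subset_iff[of n d e] divisor_ideal_subset_iff[of n e d]
  by (auto intro: dvd_antisym)

lemma divisor_ideal_eq_zero_iff: "n > 0 \<Longrightarrow> d dvd n \<Longrightarrow> divisor_ideal n d = {0} \<longleftrightarrow> d = n"
  using divisor_ideal_eq_iff[of n d n] by (simp add: divisor_ideal_self)

lemma divisor_ideal_Int: "divisor_ideal n d \<inter> divisor_ideal n e = divisor_ideal n (lcm d e)"
proof -
  have "int (lcm d e) dvd x \<longleftrightarrow> int d dvd x \<and> int e dvd x" for x
    by (simp flip: lcm_int_int_eq)
  then show ?thesis by (auto simp: divisor_ideal_def)
qed

lemma set_add_divisor_ideal:
  assumes "n > 1" and d: "d dvd n" and e: "e dvd n"
  shows "divisor_ideal n d <+>\<^bsub>Zn n\<^esub> divisor_ideal n e = divisor_ideal n (gcd d e)"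
proof
  show "divisor_ideal n d <+>\<^bsub>Zn n\<^esub> divisor_ideal n e \<subseteq> divisor_ideal n (gcd d e)"
  proof
    fix y assume "y \<in> divisor_ideal n d <+>\<^bsub>Zn n\<^esub> divisor_ideal n e"
    then obtain a b where "a \<in> divisor_ideal n d" "b \<in> divisor_ideal n e" and y: "y = (a + b) mod int n"
      unfolding set_add_def' by (auto simp: Zn_simps)
    then have "int (gcd d e) dvd a" "int (gcd d e) dvd b"
      by (auto simp: divisor_ideal_def intro: dvd_trans[of _ "int d"] dvd_trans[of _ "int e"])
    moreover have "int (gcd d e) dvd int n" using dvd_trans[OF gcd_dvd1 d] by simp
    ultimately have "int (gcd d e) dvd y" unfolding y by (intro dvd_mod dvd_add)
    then show "y \<in> divisor_ideal n (gcd d e)" using \<open>n > 1\<close> by (simp add: divisor_ideal_def y)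
  qed
  show "divisor_ideal n (gcd d e) \<subseteq> divisor_ideal n d <+>\<^bsub>Zn n\<^esub> divisor_ideal n e"
  proof
    fix y assume "y \<in> divisor_ideal n (gcd d e)"
    then obtain k where y: "0 \<le> y" "y < int n" "y = int (gcd d e) * k"
      by (auto simp: divisor_ideal_def)
    obtain u v where uv: "u * int d + v * int e = int (gcd d e)"
      using bezout_int[of "int d" "int e"] by (auto simp: gcd_int_int_eq)
    define a where "a = (int d * (u * k)) mod int n"
    define b where "b = (int e * (v * k)) mod int n"
    have "a \<in> divisor_ideal n d" "b \<in> divisor_ideal n e"
      using assms by (auto simp: a_def b_def divisor_ideal_def intro!: dvd_mod)
    moreover have "a \<oplus>\<^bsub>Zn n\<^esub> b = y"
    proof -
      have "int d * (u * k) + int e * (v * k) = y"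
        unfolding y(3) uv[symmetric] by (simp add: algebra_simps)
      then show ?thesis using y by (simp add: Zn_simps a_def b_def mod_add_eq)
    qed
    ultimately show "y \<in> divisor_ideal n d <+>\<^bsub>Zn n\<^esub> divisor_ideal n e"
      unfolding set_add_def' by blast
  qed
qed

lemma essential_divisor_ideal_iff:
  assumes n: "n > 1" and g: "g dvd n"
  shows "essential_ideal (Zn n) (divisor_ideal n g) \<longleftrightarrow> saturated_primes n g = {}"
proof -
  have "essential_ideal (Zn n) (divisor_ideal n g)
      \<longleftrightarrow> (\<forall>J. ideal J (Zn n) \<and> J \<noteq> {0} \<longrightarrow> divisor_ideal n g \<inter> J \<noteq> {0})"
    using ideal_divisor_ideal[OF n g] by (simp add: essential_ideal_def Zn_simps)
  also have "\<dots> \<longleftrightarrow> (\<forall>e. e dvd n \<and> e \<noteq> n \<longrightarrow> divisor_ideal n (lcm g e) \<noteq> {0})"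
  proof
    assume ess: "\<forall>J. ideal J (Zn n) \<and> J \<noteq> {0} \<longrightarrow> divisor_ideal n g \<inter> J \<noteq> {0}"
    show "\<forall>e. e dvd n \<and> e \<noteq> n \<longrightarrow> divisor_ideal n (lcm g e) \<noteq> {0}"
    proof (intro allI impI)
      fix e assume e: "e dvd n \<and> e \<noteq> n"
      then have "divisor_ideal n e \<noteq> {0}" using divisor_ideal_eq_zero_iff[of n e] n by simp
      then show "divisor_ideal n (lcm g e) \<noteq> {0}"
        using ess[rule_format, of "divisor_ideal n e"] ideal_divisor_ideal[OF n, of e] e
        by (simp add: divisor_ideal_Int)
    qed
  next
    assume lcm: "\<forall>e. e dvd n \<and> e \<noteq> n \<longrightarrow> divisor_ideal n (lcm g e) \<noteq> {0}"
    show "\<forall>J. ideal J (Zn n) \<and> J \<noteq> {0} \<longrightarrow> divisor_ideal n g \<inter> J \<noteq> {0}"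
    proof (intro allI impI)
      fix J assume J: "ideal J (Zn n) \<and> J \<noteq> {0}"
      then obtain e where "e dvd n" "J = divisor_ideal n e"
        using ideal_Zn_obtain_divisor_ideal[OF n] by blast
      then show "divisor_ideal n g \<inter> J \<noteq> {0}"
        using J lcm divisor_ideal_self n by (auto simp: divisor_ideal_Int)
    qed
  qed
  also have "\<dots> \<longleftrightarrow> (\<forall>e. e dvd n \<and> e \<noteq> n \<longrightarrow> lcm g e \<noteq> n)"
    using divisor_ideal_eq_zero_iff[of n] n g by auto
  also have "\<dots> \<longleftrightarrow> saturated_primes n g = {}"
    using saturated_primes_empty_iff_lcm[of n g] n g by simp
  finally show ?thesis .
qed


section \<open>The essential ideal graph of \<open>Zn n\<close>\<close>

text \<open>The set \<open>\<Xi>\<^sub>I\<close>, read off intrinsically: the primes \<open>p\<close> with \<open>I \<subseteq> \<langle>p ^ m\<^sub>p\<rangle>\<close>.\<close>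
definition ideal_support :: "nat \<Rightarrow> int set \<Rightarrow> nat set" where
  "ideal_support n I = {p \<in> prime_factors n. \<forall>x\<in>I. int (p ^ multiplicity p n) dvd x}"

lemma ideal_support_divisor_ideal:
  assumes "n > 0" and "d dvd n"
  shows "ideal_support n (divisor_ideal n d) = saturated_primes n d"
proof -
  have "p ^ multiplicity p n dvd d" if "\<forall>x\<in>divisor_ideal n d. int (p ^ multiplicity p n) dvd x" for p
  proof (cases "d = n")
    case False
    then have "int d \<in> divisor_ideal n d"
      using assms dvd_imp_le by (fastforce simp: divisor_ideal_def)
    then show ?thesis using that by (metis of_nat_dvd_iff)
  qed (simp add: multiplicity_dvd)
  moreover have "int (p ^ multiplicity p n) dvd x"
    if "p ^ multiplicity p n dvd d" "x \<in> divisor_ideal n d" for p x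
  proof -
    have "int (p ^ multiplicity p n) dvd int d" using that(1) by (simp only: of_nat_dvd_iff)
    moreover have "int d dvd x" using that(2) by (simp add: divisor_ideal_def)
    ultimately show ?thesis by (rule dvd_trans)
  qed
  ultimately show ?thesis
    by (auto simp: ideal_support_def saturated_primes_def)
qed

lemma divisor_ideal_in_EIG_vertices_iff:
  assumes "n > 1" and "d dvd n"
  shows "divisor_ideal n d \<in> EIG_vertices (Zn n) \<longleftrightarrow> d \<noteq> 1 \<and> d \<noteq> n"
  using ideal_divisor_ideal[OF assms] divisor_ideal_eq_zero_iff[of n d] divisor_ideal_eq_iff[of n d 1] assms
  by (auto simp: EIG_vertices_def Zn_simps(2) simp flip: divisor_ideal_one)

lemma EIG_vertices_Zn:
  assumes n: "n > 1"
  shows "EIG_vertices (Zn n) = divisor_ideal n ` {d. d dvd n \<and> d \<noteq> 1 \<and> d \<noteq> n}"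
proof (intro equalityI subsetI)
  fix I assume I: "I \<in> EIG_vertices (Zn n)"
  then obtain d where "d dvd n" "I = divisor_ideal n d"
    using ideal_Zn_obtain_divisor_ideal[OF n] by (auto simp: EIG_vertices_def)
  with I show "I \<in> divisor_ideal n ` {d. d dvd n \<and> d \<noteq> 1 \<and> d \<noteq> n}"
    using divisor_ideal_in_EIG_vertices_iff[OF n] by auto
qed (use divisor_ideal_in_EIG_vertices_iff[OF n] in auto)

lemma EIG_adj_Zn_iff:
  assumes n: "n > 1" and I: "I \<in> EIG_vertices (Zn n)" and K: "K \<in> EIG_vertices (Zn n)"
  shows "EIG_adj (Zn n) I K \<longleftrightarrow> I \<noteq> K \<and> ideal_support n I \<inter> ideal_support n K = {}"
proof -
  obtain d e where d: "d dvd n" "I = divisor_ideal n d" and e: "e dvd n" "K = divisor_ideal n e"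
    using I K by (auto simp: EIG_vertices_Zn[OF n])
  have "gcd d e dvd n" using dvd_trans[OF gcd_dvd1 d(1)] .
  then have "essential_ideal (Zn n) (I <+>\<^bsub>Zn n\<^esub> K)
      \<longleftrightarrow> saturated_primes n d \<inter> saturated_primes n e = {}"
    using set_add_divisor_ideal[OF n d(1) e(1)] essential_divisor_ideal_iff[OF n] d e
    by (simp add: saturated_primes_gcd)
  then show ?thesis
    using I K d e ideal_support_divisor_ideal[of n] n by (simp add: EIG_adj_def)
qed

lemma ideal_support_in_G_vertices:
  assumes n: "n > 1" and I: "I \<in> EIG_vertices (Zn n)" and "ideal_support n I \<noteq> {}"
  shows "ideal_support n I \<in> G_vertices n"
proof -
  obtain d where d: "d dvd n" "d \<noteq> n" "I = divisor_ideal n d"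
    using I by (auto simp: EIG_vertices_Zn[OF n])
  then have "ideal_support n I \<noteq> prime_factors n"
    using saturated_primes_eq_prime_factors[of n d] ideal_support_divisor_ideal[of n d] n by auto
  with assms show ?thesis by (auto simp: G_vertices_def ideal_support_def)
qed

lemma card_EIG_vertices_ideal_support:
  assumes n: "n > 1" and S: "S \<in> G_vertices n"
  shows "card {I \<in> EIG_vertices (Zn n). ideal_support n I = S} = n_weight n S"
proof -
  have S': "S \<subseteq> prime_factors n" "S \<noteq> {}" "S \<noteq> prime_factors n"
    using S by (auto simp: G_vertices_def)
  define D where "D = {d. d dvd n \<and> saturated_primes n d = S}"
  have "{I \<in> EIG_vertices (Zn n). ideal_support n I = S} = divisor_ideal n ` D"
  proof (intro equalityI subsetI)
    fix I assume I: "I \<in> {I \<in> EIG_vertices (Zn n). ideal_support n I = S}"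
    then obtain d where d: "d dvd n" "I = divisor_ideal n d"
      unfolding EIG_vertices_Zn[OF n] by blast
    then have "d \<in> D" using I ideal_support_divisor_ideal[of n d] n by (simp add: D_def)
    with d show "I \<in> divisor_ideal n ` D" by blast
  next
    fix I assume "I \<in> divisor_ideal n ` D"
    then obtain d where d: "d dvd n" "saturated_primes n d = S" "I = divisor_ideal n d"
      unfolding D_def by blast
    then have "d \<noteq> 1" "d \<noteq> n" using S' saturated_primes_one saturated_primes_self by auto
    with d have "I \<in> EIG_vertices (Zn n)" unfolding EIG_vertices_Zn[OF n] by blast
    moreover have "ideal_support n I = S" using d ideal_support_divisor_ideal[of n d] n by simp
    ultimately show "I \<in> {I \<in> EIG_vertices (Zn n). ideal_support n I = S}" by blast
  qed
  moreover have "inj_on (divisor_ideal n) D"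
    by (rule inj_onI) (use divisor_ideal_eq_iff[of n] n in \<open>simp add: D_def\<close>)
  ultimately have "card {I \<in> EIG_vertices (Zn n). ideal_support n I = S} = card D"
    by (simp add: card_image)
  also have "\<dots> = n_weight n S"
    using card_divisors_saturated_primes[OF _ S'(1)] n by (simp add: D_def n_weight_def)
  finally show ?thesis .
qed

lemma n_weight_pos: "0 < n_weight n S"
  unfolding n_weight_def by (rule prod_pos) (auto simp: prime_factors_multiplicity)

text \<open>The essential ideals of \<open>Zn n\<close> are those with empty support; they are the universal vertices.\<close>
lemma blowup_graph_EIG_Zn:
  assumes n: "n > 1"
  shows "blowup_graph (EIG_vertices (Zn n)) (EIG_adj (Zn n)) (G_vertices n) (G_adj n) (n_weight n)
           (ideal_support n) {I \<in> EIG_vertices (Zn n). ideal_support n I = {}}"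
proof (rule blowup_graph.intro)
  show "finite (EIG_vertices (Zn n))"
    unfolding EIG_vertices_Zn[OF n] using n
    by (intro finite_imageI finite_subset[OF _ finite_divisors_nat[of n]]) auto
  show "finite (G_vertices n)"
    by (rule finite_subset[of _ "Pow (prime_factors n)"]) (auto simp: G_vertices_def)
  show "card {I \<in> EIG_vertices (Zn n) - {I \<in> EIG_vertices (Zn n). ideal_support n I = {}}.
      ideal_support n I = S} = n_weight n S" if "S \<in> G_vertices n" for S
  proof -
    have "S \<noteq> {}" using that by (simp add: G_vertices_def)
    then have "{I \<in> EIG_vertices (Zn n) - {I \<in> EIG_vertices (Zn n). ideal_support n I = {}}.
        ideal_support n I = S} = {I \<in> EIG_vertices (Zn n). ideal_support n I = S}"
      by blast
    then show ?thesis using card_EIG_vertices_ideal_support[OF n that] by simp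
  qed
  show "EIG_adj (Zn n) I K \<longleftrightarrow> I \<noteq> K \<and> (I \<in> {I \<in> EIG_vertices (Zn n). ideal_support n I = {}}
      \<or> K \<in> {I \<in> EIG_vertices (Zn n). ideal_support n I = {}} \<or> G_adj n (ideal_support n I) (ideal_support n K))"
    if "I \<in> EIG_vertices (Zn n)" "K \<in> EIG_vertices (Zn n)" for I K
    using EIG_adj_Zn_iff[OF n that] ideal_support_in_G_vertices[OF n] that by (auto simp: G_adj_def)
qed (use ideal_support_in_G_vertices[OF n] n_weight_pos in \<open>auto simp: G_adj_def G_vertices_def\<close>)

theorem mainTheorem12:
  fixes n :: nat
  assumes "n > 1" and "\<not> Factorial_Ring.prime n"
  shows "laplacian_integral (EIG_vertices (Zn n)) (EIG_adj (Zn n))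
     \<longleftrightarrow> all_eigenvalues_integral (G_vertices n) (LG n)"
proof -
  interpret blowup_graph "EIG_vertices (Zn n)" "EIG_adj (Zn n)" "G_vertices n" "G_adj n" "n_weight n"
    "ideal_support n" "{I \<in> EIG_vertices (Zn n). ideal_support n I = {}}"
    using \<open>n > 1\<close> by (rule blowup_graph_EIG_Zn)
  have "LG n = weighted_laplacian (G_vertices n) (G_adj n) (n_weight n)"
    by (simp add: fun_eq_iff LG_def N_weight_def weighted_laplacian_def weighted_degree_def)
  then show ?thesis by (simp add: laplacian_integral_iff)
qed

end
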